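(* Fix integers $s \geq 2$ and $q \ge 1$, and let $\mathcal{F} \subseteq Z_s^q$ be a $\{0,1\}$-covering family of vectors. Then $|\mathcal{F}| \leq 2^{q-1}$. For $s=2$ equality can be attained, i.e. there is a $\{0,1\}$-covering family in $Z_2^q$ of size $2^{q-1}$.
   Context: Let $Z_s$ be the ring of integers modulo $s$. For $A \subseteq Z_s$, a vector $v=(v_1,\dots,v_q)\in Z_s^q$ is $A$-covering if for every $a \in A$ there is $1 \le i \le q$ with $v_i = a$. A family $\mathcal{F} \subseteq Z_s^q$ is $A$-covering if for every ordered pair of distinct vectors $u,v \in \mathcal{F}$ the difference $u-v$ is $A$-covering. *)

theory Defs
  imports Main
begin

text \<open>Elements of Z_s are represented by naturals in {0..<s}; a vector in Z_s^q is a
function nat \<Rightarrow> nat with coordinates 0..q-1 in {0..<s} and zero outside (canonical form).\<close>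

definition zvecs :: "nat \<Rightarrow> nat \<Rightarrow> (nat \<Rightarrow> nat) set" where
  "zvecs s q = {v. (\<forall>i<q. v i < s) \<and> (\<forall>i\<ge>q. v i = 0)}"

definition zdiff :: "nat \<Rightarrow> nat \<Rightarrow> (nat \<Rightarrow> nat) \<Rightarrow> (nat \<Rightarrow> nat) \<Rightarrow> (nat \<Rightarrow> nat)" where
  "zdiff s q u v = (\<lambda>i. if i < q then (u i + s - v i) mod s else 0)"

definition A_covering_vec :: "nat \<Rightarrow> nat set \<Rightarrow> (nat \<Rightarrow> nat) \<Rightarrow> bool" where
  "A_covering_vec q A v \<longleftrightarrow> (\<forall>a\<in>A. \<exists>i<q. v i = a)"

definition A_covering_family :: "nat \<Rightarrow> nat \<Rightarrow> nat set \<Rightarrow> (nat \<Rightarrow> nat) set \<Rightarrow> bool" where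
  "A_covering_family s q A F \<longleftrightarrow>
     (\<forall>u\<in>F. \<forall>v\<in>F. u \<noteq> v \<longrightarrow> A_covering_vec q A (zdiff s q u v))"

end

theory Submission
  imports Defs Complex_Main "HOL-Library.Function_Algebras"
begin

(* For v in F let f_v y = prod_{i<q} (y_i - ((v_i + 1) mod s)) and g_v y = prod_{i<q} (y_i - v_i),
   as real functions of y.  Covering 0 means that any two vectors of F agree in some coordinate;
   covering 1 means that each u <> v exceeds v by 1 (mod s) in some coordinate.  Hence f_v vanishes on F
   except at v and on all of F + 1, while g_v vanishes on all of F and on F + 1 except at v + 1.
   These 2 |F| functions thus form a biorthogonal system, so they are linearly independent; as they
   lie in the span of the 2^q multilinear monomials, 2 |F| <= 2^q.  For s = 2 the 0/1-vectors
   vanishing in coordinate 0 form a family of size 2^(q-1). *)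

interpretation pointwise: vector_space "\<lambda>(c::'k::field) (f::'a \<Rightarrow> 'k) y. c * f y"
  by unfold_locales (auto simp: fun_eq_iff algebra_simps)

lemma sum_fun_apply: "sum f A y = (\<Sum>a\<in>A. f a y)"
  by (induction A rule: infinite_finite_induct) auto

definition multilinear_monomial :: "nat set \<Rightarrow> (nat \<Rightarrow> 'k::comm_ring_1) \<Rightarrow> 'k" where
  "multilinear_monomial S y = (\<Prod>i\<in>S. y i)"

lemma prod_sub_in_span_multilinear_monomials:
  fixes c :: "nat \<Rightarrow> 'k::field"
  shows "(\<lambda>y. \<Prod>i<q. y i - c i) \<in> pointwise.span (multilinear_monomial ` Pow {..<q})"
proof -
  have "(\<lambda>y. \<Prod>i<q. y i - c i)
      = (\<Sum>S\<in>Pow {..<q}. (\<lambda>y. (\<Prod>i\<in>{..<q} - S. - c i) * multilinear_monomial S y))"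
  proof
    fix y
    have "(\<Prod>i<q. y i - c i) = (\<Prod>i<q. y i + - c i)" by simp
    also have "\<dots> = (\<Sum>S\<in>Pow {..<q}. (\<Prod>i\<in>S. y i) * (\<Prod>i\<in>{..<q} - S. - c i))"
      by (rule prod_add) simp
    finally show "(\<Prod>i<q. y i - c i)
      = (\<Sum>S\<in>Pow {..<q}. (\<lambda>y. (\<Prod>i\<in>{..<q} - S. - c i) * multilinear_monomial S y)) y"
      by (simp add: sum_fun_apply multilinear_monomial_def mult.commute)
  qed
  also have "\<dots> \<in> pointwise.span (multilinear_monomial ` Pow {..<q})"
    by (intro pointwise.span_sum pointwise.span_scale pointwise.span_base) auto
  finally show ?thesis .
qed

lemma biorthogonal_independent:
  fixes h :: "'i \<Rightarrow> 'a \<Rightarrow> 'k::field" and x :: "'i \<Rightarrow> 'a"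
  assumes biorth: "\<And>a b. a \<in> I \<Longrightarrow> b \<in> I \<Longrightarrow> h a (x b) = 0 \<longleftrightarrow> a \<noteq> b"
  shows "inj_on h I" and "pointwise.independent (h ` I)"
proof -
  show "inj_on h I"
    by (rule inj_onI) (metis biorth)
  show "pointwise.independent (h ` I)"
    unfolding pointwise.independent_explicit_module
  proof (intro allI impI)
    fix t u g
    assume t: "finite t" "t \<subseteq> h ` I" and zero: "(\<Sum>f\<in>t. (\<lambda>y. u f * f y)) = 0"
      and g: "g \<in> t"
    then obtain b where b: "b \<in> I" "g = h b" by blast
    have "0 = (\<Sum>f\<in>t. u f * f (x b))"
      using fun_cong[OF zero, of "x b"] by (simp add: sum_fun_apply)
    also have "\<dots> = u g * g (x b) + (\<Sum>f\<in>t - {g}. u f * f (x b))"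
      by (rule sum.remove[OF t(1) g])
    also have "(\<Sum>f\<in>t - {g}. u f * f (x b)) = 0"
      using t(2) b biorth by (intro sum.neutral) fastforce
    finally show "u g = 0"
      using biorth b by simp
  qed
qed

lemma card_le_of_biorthogonal_in_span:
  fixes h :: "'i \<Rightarrow> 'a \<Rightarrow> 'k::field" and x :: "'i \<Rightarrow> 'a"
  assumes "\<And>a b. a \<in> I \<Longrightarrow> b \<in> I \<Longrightarrow> h a (x b) = 0 \<longleftrightarrow> a \<noteq> b"
    and "finite T" and "h ` I \<subseteq> pointwise.span T"
  shows "card I \<le> card T"
  using pointwise.independent_span_bound[OF assms(2) biorthogonal_independent(2) assms(3)]
    card_image[OF biorthogonal_independent(1)] assms(1) by metis

lemma add_diff_mod_eq_iff:
  fixes a b c s :: nat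
  assumes "a < s" "b < s" "c < s"
  shows "(a + s - b) mod s = c \<longleftrightarrow> a = (b + c) mod s"
  using assms by (cases "b \<le> a") (auto simp: mod_if)

lemma zdiff_eq_iff:
  assumes "u \<in> zvecs s q" "v \<in> zvecs s q" "i < q" "c < s"
  shows "zdiff s q u v i = c \<longleftrightarrow> u i = (v i + c) mod s"
  using assms add_diff_mod_eq_iff[of "u i" s "v i" c] by (simp add: zdiff_def zvecs_def)

lemma mod_Suc_neq_self:
  fixes a s :: nat
  assumes "2 \<le> s" "a < s"
  shows "(a + 1) mod s \<noteq> a"
  using assms by (cases "a + 1 = s") (auto simp: mod_if)

lemma covering_family_01_agree:
  assumes "F \<subseteq> zvecs s q" "A_covering_family s q {0, 1} F" "1 \<le> q"
    and "u \<in> F" "v \<in> F"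
  shows "\<exists>i<q. u i = v i"
proof (cases "u = v")
  case False
  then obtain i where i: "i < q" "zdiff s q u v i = 0"
    using assms(2,4,5) unfolding A_covering_family_def A_covering_vec_def by blast
  have uv: "u \<in> zvecs s q" "v \<in> zvecs s q"
    using assms(1,4,5) by auto
  then have "v i < s"
    using i(1) by (simp add: zvecs_def)
  then have "u i = v i"
    using zdiff_eq_iff[OF uv i(1), of 0] i(2) by simp
  with i(1) show ?thesis by blast
qed (use assms(3) in \<open>auto intro: exI[of _ 0]\<close>)

lemma covering_family_01_shift_iff:
  assumes "F \<subseteq> zvecs s q" "A_covering_family s q {0, 1} F" "2 \<le> s"
    and "u \<in> F" "v \<in> F"
  shows "(\<exists>i<q. u i = (v i + 1) mod s) \<longleftrightarrow> u \<noteq> v"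
proof -
  have uv: "u \<in> zvecs s q" "v \<in> zvecs s q"
    using assms(1,4,5) by auto
  show ?thesis
  proof
    assume "\<exists>i<q. u i = (v i + 1) mod s"
    then obtain i where i: "i < q" "u i = (v i + 1) mod s"
      by blast
    moreover have "v i < s"
      using i(1) uv(2) by (simp add: zvecs_def)
    ultimately show "u \<noteq> v"
      using mod_Suc_neq_self[OF assms(3)] by metis
  next
    assume "u \<noteq> v"
    then obtain i where i: "i < q" "zdiff s q u v i = 1"
      using assms(2,4,5) unfolding A_covering_family_def A_covering_vec_def by blast
    then show "\<exists>i<q. u i = (v i + 1) mod s"
      using zdiff_eq_iff[OF uv i(1), of 1] assms(3) by auto
  qed
qed

lemma card_01_covering_family_le:
  assumes "2 \<le> s" "1 \<le> q" and F: "F \<subseteq> zvecs s q" "A_covering_family s q {0, 1} F"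
  shows "card F \<le> 2 ^ (q - 1)"
proof -
  define succ where "succ v = (\<lambda>i. (v i + 1) mod s)" for v :: "nat \<Rightarrow> nat"
  define vanish :: "(nat \<Rightarrow> nat) \<Rightarrow> (nat \<Rightarrow> real) \<Rightarrow> real"
    where "vanish c y = (\<Prod>i<q. y i - real (c i))" for c y
  \<comment> \<open>index \<open>(v, False)\<close> stands for f_v at v, index \<open>(v, True)\<close> for g_v at v + 1\<close>
  define poly where "poly = (\<lambda>(v, b). vanish (if b then v else succ v))"
  define point where "point = (\<lambda>(v, b). real \<circ> (if b then succ v else v))"
  define monomials :: "((nat \<Rightarrow> real) \<Rightarrow> real) set"
    where "monomials = multilinear_monomial ` Pow {..<q}"
  have vanish_eq_0: "vanish c (real \<circ> u) = 0 \<longleftrightarrow> (\<exists>i<q. u i = c i)" for c u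
    by (auto simp: vanish_def)
  have "poly a (point b) = 0 \<longleftrightarrow> a \<noteq> b" if ab_in: "a \<in> F \<times> UNIV" "b \<in> F \<times> UNIV" for a b
  proof -
    obtain v c u d where ab: "a = (v, c)" "b = (u, d)" "u \<in> F" "v \<in> F"
      using ab_in by (cases a; cases b) auto
    have agree: "\<exists>i<q. u i = v i" "\<exists>i<q. succ u i = succ v i"
      using covering_family_01_agree[OF F \<open>1 \<le> q\<close> ab(3,4)] by (auto simp: succ_def)
    have shift: "(\<exists>i<q. u i = succ v i) \<longleftrightarrow> u \<noteq> v" "(\<exists>i<q. succ u i = v i) \<longleftrightarrow> u \<noteq> v"
      using covering_family_01_shift_iff[OF F \<open>2 \<le> s\<close> ab(3,4)]
        covering_family_01_shift_iff[OF F \<open>2 \<le> s\<close> ab(4,3)]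
      by (auto simp: succ_def)
    show ?thesis
      using agree shift by (cases c; cases d) (auto simp: ab poly_def point_def vanish_eq_0)
  qed
  moreover have "poly ` (F \<times> UNIV) \<subseteq> pointwise.span monomials"
    using prod_sub_in_span_multilinear_monomials
    by (auto simp: poly_def vanish_def[abs_def] monomials_def)
  ultimately have "card (F \<times> (UNIV :: bool set)) \<le> card monomials"
    by (intro card_le_of_biorthogonal_in_span[of _ poly point]) (auto simp: monomials_def)
  also have "\<dots> \<le> 2 ^ q"
    using card_image_le[of "Pow {..<q}" multilinear_monomial] by (simp add: monomials_def card_Pow)
  finally show ?thesis
    using \<open>1 \<le> q\<close> by (cases q) (auto simp: card_cartesian_product)
qed

lemma exists_01_covering_family_Z2:
  assumes "1 \<le> q"
  shows "\<exists>F. F \<subseteq> zvecs 2 q \<and> A_covering_family 2 q {0, 1} F \<and> card F = 2 ^ (q - 1)"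
proof (intro exI conjI)
  define ind :: "nat set \<Rightarrow> nat \<Rightarrow> nat" where "ind S i = (if i \<in> S then 1 else 0)" for S i
  define F where "F = ind ` Pow {1..<q}"
  have "inj ind"
    by (rule injI) (metis ind_def one_neq_zero subsetI subset_antisym)
  then show "card F = 2 ^ (q - 1)"
    by (simp add: F_def card_image inj_on_subset card_Pow)
  show "F \<subseteq> zvecs 2 q"
    by (auto simp: F_def ind_def zvecs_def)
  show "A_covering_family 2 q {0, 1} F"
    unfolding A_covering_family_def A_covering_vec_def
  proof (intro ballI impI)
    fix u v :: "nat \<Rightarrow> nat" and c :: nat
    assume "u \<in> F" "v \<in> F" "u \<noteq> v" "c \<in> {0, 1}"
    then obtain S T where ST: "S \<subseteq> {1..<q}" "T \<subseteq> {1..<q}" "u = ind S" "v = ind T" "S \<noteq> T"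
      by (auto simp: F_def)
    then obtain i where "i \<in> S \<longleftrightarrow> i \<notin> T" "i \<in> S \<union> T"
      by blast
    then have "i < q" "zdiff 2 q u v i = 1" "zdiff 2 q u v 0 = 0"
      using ST assms by (auto simp: zdiff_def ind_def)
    then show "\<exists>i<q. zdiff 2 q u v i = c"
      using \<open>c \<in> {0, 1}\<close> by (metis empty_iff insertE neq0_conv not_less0)
  qed
qed

theorem proposition3p1:
  fixes s q :: nat
  assumes "s \<ge> 2" and "q \<ge> 1"
  shows "(\<forall>F. F \<subseteq> zvecs s q \<and> A_covering_family s q {0, 1} F \<longrightarrow> card F \<le> 2 ^ (q - 1))
       \<and> (s = 2 \<longrightarrow> (\<exists>F. F \<subseteq> zvecs 2 q \<and> A_covering_family 2 q {0, 1} F \<and> card F = 2 ^ (q - 1)))"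
  using card_01_covering_family_le[OF assms] exists_01_covering_family_Z2[OF assms(2)] by blast

end
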